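(* For a Hirzebruch-Jung continued fraction $v=[n_1,\dots,n_l]$ (all $n_j\ge 2$ integers), the integer $q_1+q_l-q$ (computed for $v$ with its own length $l$) is unchanged when $v$ is replaced by $\tau(v)$ or by $r(v)$.
   Context: For numbers $n_1,\dots,n_l$ let $M(-n_1,\dots,-n_l)$ be the $l\times l$ tridiagonal symmetric matrix with diagonal entries $-n_1,\dots,-n_l$, entries $1$ directly above and below the diagonal, and $0$ elsewhere. Put $q=|\det M(-n_1,\dots,-n_l)|$, $q_1=|\det M(-n_2,\dots,-n_l)|$, $q_l=|\det M(-n_1,\dots,-n_{l-1})|$, with the convention that the determinant of the empty matrix is $1$. The continued fraction is $[n_1,\dots,n_l]=n_1-1/(n_2-1/(\cdots-1/n_l))$. The $\tau$-operation is $\tau([n_1,\dots,n_l])=[2,n_1,\dots,n_{l-1},n_l+1]$ (length $l+1$), and the reverse operation is $r([n_1,\dots,n_l])=[n_l,\dots,n_1]$. *)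

theory Defs
  imports "Jordan_Normal_Form.Determinant"
begin

definition tri_mat :: "int list \<Rightarrow> int mat" where
  "tri_mat ns = mat (length ns) (length ns)
     (\<lambda>(i, j). if i = j then - (ns ! i)
               else if i = j + 1 \<or> j = i + 1 then 1 else 0)"

text \<open>q = |det M(-n_1..-n_l)|; the determinant of the 0x0 matrix is 1.\<close>
definition hj_q :: "int list \<Rightarrow> int" where
  "hj_q ns = \<bar>det (tri_mat ns)\<bar>"

definition hj_q1 :: "int list \<Rightarrow> int" where
  "hj_q1 ns = \<bar>det (tri_mat (tl ns))\<bar>"

definition hj_ql :: "int list \<Rightarrow> int" where
  "hj_ql ns = \<bar>det (tri_mat (butlast ns))\<bar>"

definition hj_invariant :: "int list \<Rightarrow> int" where
  "hj_invariant ns = hj_q1 ns + hj_ql ns - hj_q ns"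

definition hj_tau :: "int list \<Rightarrow> int list" where
  "hj_tau ns = 2 # butlast ns @ [last ns + 1]"

definition hj_rev :: "int list \<Rightarrow> int list" where
  "hj_rev ns = rev ns"

end

theory Submission
  imports Defs
begin

text \<open>Expanding the tridiagonal determinant along its first row gives the three-term
  recursion of the continuant K, so for entries \<open>\<ge> 2\<close> the numbers q, q_1, q_l are
  K v, K (tl v), K (butlast v). Continuants are invariant under reversal, which settles r.
  For \<tau>, K is affine in the last entry, K(u @ [z+1]) = K(u @ [z]) + K u, and expanding
  the new leading entry 2 makes all changes cancel.\<close>

lemma det_expand_first_column_single:
  fixes A :: "'a :: comm_ring_1 mat"
  assumes A: "A \<in> carrier_mat (Suc n) (Suc n)"
    and zero: "\<And>i. 0 < i \<Longrightarrow> i < Suc n \<Longrightarrow> A $$ (i, 0) = 0"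
  shows "det A = A $$ (0, 0) * det (mat_delete A 0 0)"
proof -
  have "det A = (\<Sum>i<Suc n. A $$ (i, 0) * cofactor A i 0)"
    using laplace_expansion_column[OF A] by simp
  also have "\<dots> = (\<Sum>i\<in>{0}. A $$ (i, 0) * cofactor A i 0)"
    by (rule sum.mono_neutral_right) (auto simp: zero)
  finally show ?thesis by (simp add: cofactor_def)
qed

lemma det_expand_first_row_two:
  fixes A :: "'a :: comm_ring_1 mat"
  assumes A: "A \<in> carrier_mat (Suc (Suc n)) (Suc (Suc n))"
    and zero: "\<And>j. 1 < j \<Longrightarrow> j < Suc (Suc n) \<Longrightarrow> A $$ (0, j) = 0"
  shows "det A = A $$ (0, 0) * det (mat_delete A 0 0) - A $$ (0, 1) * det (mat_delete A 0 1)"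
proof -
  have "det A = (\<Sum>j<Suc (Suc n). A $$ (0, j) * cofactor A 0 j)"
    using laplace_expansion_row[OF A] by simp
  also have "\<dots> = (\<Sum>j\<in>{0, 1}. A $$ (0, j) * cofactor A 0 j)"
    by (rule sum.mono_neutral_right) (auto simp: zero)
  finally show ?thesis by (simp add: cofactor_def)
qed

lemma tri_mat_carrier: "tri_mat ns \<in> carrier_mat (length ns) (length ns)"
  unfolding tri_mat_def by auto

lemma tri_mat_index [simp]:
  "i < length ns \<Longrightarrow> j < length ns \<Longrightarrow> tri_mat ns $$ (i, j) =
     (if i = j then - (ns ! i) else if i = j + 1 \<or> j = i + 1 then 1 else 0)"
  unfolding tri_mat_def by simp

lemma dim_tri_mat [simp]:
  "dim_row (tri_mat ns) = length ns" "dim_col (tri_mat ns) = length ns"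
  unfolding tri_mat_def by simp_all

lemma mat_delete_tri_mat_Cons: "mat_delete (tri_mat (a # ns)) 0 0 = tri_mat ns"
  by (rule eq_matI) (auto simp: mat_delete_def)

lemma det_tri_mat_Nil: "det (tri_mat []) = 1"
  by (rule det_dim_zero) (simp add: tri_mat_def)

lemma det_tri_mat_single: "det (tri_mat [a]) = - a"
  using det_expand_first_column_single[of "tri_mat [a]" 0] tri_mat_carrier[of "[a]"]
  by (simp add: mat_delete_tri_mat_Cons det_tri_mat_Nil)

lemma det_tri_mat_Cons_Cons:
  "det (tri_mat (a # b # ns)) = - a * det (tri_mat (b # ns)) - det (tri_mat ns)"
proof -
  let ?T = "tri_mat (a # b # ns)"
  let ?N = "mat_delete ?T 0 1"
  have N: "?N \<in> carrier_mat (Suc (length ns)) (Suc (length ns))"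
    using mat_delete_carrier[OF tri_mat_carrier[of "a # b # ns"]] by simp
  have "det ?N = ?N $$ (0, 0) * det (mat_delete ?N 0 0)"
    by (rule det_expand_first_column_single[OF N]) (auto simp: mat_delete_def)
  also have "mat_delete ?N 0 0 = tri_mat ns"
    by (rule eq_matI) (auto simp: mat_delete_def)
  finally have "det ?N = det (tri_mat ns)"
    by (simp add: mat_delete_def)
  moreover have "det ?T = ?T $$ (0, 0) * det (mat_delete ?T 0 0) - ?T $$ (0, 1) * det ?N"
    by (rule det_expand_first_row_two) (use tri_mat_carrier[of "a # b # ns"] in auto)
  ultimately show ?thesis
    by (simp add: mat_delete_tri_mat_Cons)
qed

text \<open>The numerator of the continued fraction [n_1, ..., n_l].\<close>
fun continuant :: "int list \<Rightarrow> int" where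
  "continuant [] = 1"
| "continuant [a] = a"
| "continuant (a # b # ns) = a * continuant (b # ns) - continuant ns"

lemma det_tri_mat_eq_continuant: "det (tri_mat ns) = (-1) ^ length ns * continuant ns"
  by (induction ns rule: continuant.induct)
     (simp_all add: det_tri_mat_Nil det_tri_mat_single det_tri_mat_Cons_Cons algebra_simps)

lemma continuant_append_two:
  "continuant (ns @ [x, y]) = y * continuant (ns @ [x]) - continuant ns"
proof (induction ns rule: continuant.induct)
  case (3 a b ns)
  have IH: "continuant (b # ns @ [x, y]) = y * continuant (b # ns @ [x]) - continuant (b # ns)"
    "continuant (ns @ [x, y]) = y * continuant (ns @ [x]) - continuant ns"
    using "3.IH" by simp_all
  show ?case by (simp add: IH algebra_simps)
qed (simp_all add: algebra_simps)

lemma continuant_snoc: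
  assumes "ns \<noteq> []"
  shows "continuant (ns @ [x]) = x * continuant ns - continuant (butlast ns)"
  using continuant_append_two[of "butlast ns" "last ns" x] assms
  by (metis append_butlast_last_id append_Cons append_Nil append_assoc)

lemma continuant_rev: "continuant (rev ns) = continuant ns"
  by (induction ns rule: continuant.induct) (simp_all add: continuant_append_two)

lemma continuant_snoc_plus_one:
  "continuant (ns @ [x + 1]) = continuant (ns @ [x]) + continuant ns"
  by (cases "ns = []") (simp_all add: continuant_snoc algebra_simps)

lemma continuant_tl_le:
  assumes "\<forall>n \<in> set ns. n \<ge> 2"
  shows "1 \<le> continuant (tl ns) \<and> continuant (tl ns) \<le> continuant ns"
  using assms
proof (induction ns rule: continuant.induct)
  case (3 a b ns)
  then have "a \<ge> 2" and pos: "1 \<le> continuant (b # ns)"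
    and le: "continuant ns \<le> continuant (b # ns)"
    by auto
  then have "2 * continuant (b # ns) \<le> a * continuant (b # ns)"
    by (simp add: mult_right_mono)
  with le have "continuant (b # ns) \<le> a * continuant (b # ns) - continuant ns"
    by linarith
  with pos show ?case by simp
qed simp_all

lemma continuant_pos:
  assumes "\<forall>n \<in> set ns. n \<ge> 2"
  shows "1 \<le> continuant ns"
  using continuant_tl_le[OF assms] by linarith

lemma abs_det_tri_mat:
  assumes "\<forall>n \<in> set ns. n \<ge> 2"
  shows "\<bar>det (tri_mat ns)\<bar> = continuant ns"
  using continuant_pos[OF assms] by (simp add: det_tri_mat_eq_continuant abs_mult)

lemma hj_invariant_eq_continuant:
  assumes "\<forall>n \<in> set ns. n \<ge> 2"
  shows "hj_invariant ns = continuant (tl ns) + continuant (butlast ns) - continuant ns"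
proof -
  have "set (tl ns) \<subseteq> set ns" "set (butlast ns) \<subseteq> set ns"
    by (cases ns) (auto dest: in_set_butlastD)
  with assms show ?thesis
    by (simp add: hj_invariant_def hj_q_def hj_q1_def hj_ql_def abs_det_tri_mat subset_iff)
qed

lemma hj_invariant_rev:
  assumes "\<forall>n \<in> set ns. n \<ge> 2"
  shows "hj_invariant (hj_rev ns) = hj_invariant ns"
proof -
  have "tl (rev ns) = rev (butlast ns)" "butlast (rev ns) = rev (tl ns)"
    by (metis butlast_rev rev_rev_ident) (simp add: butlast_rev)
  with assms show ?thesis
    by (simp add: hj_rev_def hj_invariant_eq_continuant continuant_rev)
qed

lemma hj_invariant_tau:
  assumes "ns \<noteq> []" and "\<forall>n \<in> set ns. n \<ge> 2"
  shows "hj_invariant (hj_tau ns) = hj_invariant ns"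
proof -
  obtain u z where ns: "ns = u @ [z]"
    using assms(1) by (metis rev_exhaust)
  have ge: "\<forall>n \<in> set (u @ [z]). n \<ge> 2"
    using assms(2) ns by simp
  then have tau_ge: "\<forall>n \<in> set (2 # u @ [z + 1]). n \<ge> 2"
    by auto
  have "hj_invariant (2 # u @ [z + 1]) = hj_invariant (u @ [z])"
  proof (cases u)
    case Nil
    then show ?thesis
      using tau_ge ge by (simp add: hj_invariant_eq_continuant)
  next
    case (Cons c w)
    have "continuant (c # w @ [z + 1]) = continuant (c # w @ [z]) + continuant (c # w)"
      using continuant_snoc_plus_one[of "c # w" z] by simp
    moreover have "continuant (w @ [z + 1]) = continuant (w @ [z]) + continuant w"
      by (rule continuant_snoc_plus_one)
    ultimately show ?thesis
      using tau_ge ge by (simp add: hj_invariant_eq_continuant Cons)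
  qed
  then show ?thesis
    by (simp add: hj_tau_def ns)
qed

theorem lemma2p6:
  fixes v :: "int list"
  assumes "v \<noteq> []"
    and "\<forall>n \<in> set v. n \<ge> 2"
  shows "hj_invariant (hj_tau v) = hj_invariant v \<and> hj_invariant (hj_rev v) = hj_invariant v"
  using hj_invariant_tau[OF assms] hj_invariant_rev[OF assms(2)] by simp

end
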